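(* With the setup of the context, let $\mu$ be a symmetric weight on $F$, and assume that $\overline G$ and $\overline H$ both satisfy the bunkbed conjecture. Then for all $x\in V(\overline G)$ and $y\in V(\overline H)$, $\mathbb P_{F,\mu}(x^-\sim_F y^+)\le \mathbb P_{F,\mu}(x^-\sim_F y^-)$.
   Context: All graphs are finite and simple. For a graph $G$, a weight is a function $\mu\colon E(G)\to[0,1]$; the associated edge-percolation probability space has sample space $\mathscr P(E(G))$, with $\mathbb P_{G,\mu}(X)=\prod_{e\in X}\mu(e)\prod_{e\notin X}(1-\mu(e))$ for $X\subseteq E(G)$ (edges independently open, edge $e$ with probability $\mu(e)$). For vertices $x,y$, $(x\sim_G y)$ is the event that $x$ and $y$ are joined by a path of open edges of $G$. The bunkbed graph $BB(G)=G\,\Box\,K_2$ has vertex set $V(G)\times\{0,1\}$, writing $x^-=(x,0)$, $x^+=(x,1)$, with edges $x^-y^-$ and $x^+y^+$ for every $xy\in E(G)$ and vertical edges $x^-x^+$ for every $x\in V(G)$. A weight $\mu$ on $BB(G)$ is symmetric if $\mu(x^-y^-)=\mu(x^+y^+)$ for every $xy\in E(G)$. A graph $G$ satisfies the bunkbed conjecture if for every symmetric weight $\mu$ on $BB(G)$ and all $x,y\in V(G)$, $\mathbb P_{BB(G),\mu}(x^-\sim y^-)\ge \mathbb P_{BB(G),\mu}(x^-\sim y^+)$. Setup: let $\overline F$ be a graph and $v\in V(\overline F)$ a cut vertex; let $V_1,\dots,V_k$ ($k\ge2$) be the vertex sets of the components of $\overline F\setminus\{v\}$, fix $I\subseteq\{1,\dots,k\}$,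 and set $\overline G=\overline F[\bigcup_{i\in I}V_i\cup\{v\}]$, $\overline H=\overline F[\bigcup_{i\notin I}V_i\cup\{v\}]$ (induced subgraphs). Let $F=BB(\overline F)$, $G=BB(\overline G)$, $H=BB(\overline H)$, regarded as subgraphs of $F$. *)

theory Defs
  imports Complex_Main
begin

definition simple_graph :: "'a set \<Rightarrow> 'a set set \<Rightarrow> bool" where
  "simple_graph V E \<longleftrightarrow> finite V \<and>
     (\<forall>e\<in>E. \<exists>x y. x \<in> V \<and> y \<in> V \<and> x \<noteq> y \<and> e = {x, y})"

definition induced_edges :: "'a set set \<Rightarrow> 'a set \<Rightarrow> 'a set set" where
  "induced_edges E S = {e \<in> E. e \<subseteq> S}"

definition joined :: "'a set set \<Rightarrow> 'a \<Rightarrow> 'a \<Rightarrow> bool" where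
  "joined X a b \<longleftrightarrow> (\<lambda>u w. {u, w} \<in> X)\<^sup>*\<^sup>* a b"

definition components :: "'a set \<Rightarrow> 'a set set \<Rightarrow> 'a set set" where
  "components V E = {{y \<in> V. joined E x y} | x. x \<in> V}"

definition cut_vertex :: "'a set \<Rightarrow> 'a set set \<Rightarrow> 'a \<Rightarrow> bool" where
  "cut_vertex V E v \<longleftrightarrow> v \<in> V \<and>
     card (components (V - {v}) (induced_edges E (V - {v}))) > card (components V E)"

text \<open>Bunkbed graph: x^- = (x,False), x^+ = (x,True).\<close>
definition bb_vertices :: "'a set \<Rightarrow> ('a \<times> bool) set" where
  "bb_vertices V = V \<times> (UNIV :: bool set)"

definition bb_edges :: "'a set \<Rightarrow> 'a set set \<Rightarrow> ('a \<times> bool) set set" where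
  "bb_edges V E =
     {{(x, b), (y, b)} | x y b. {x, y} \<in> E} \<union> {{(x, False), (x, True)} | x. x \<in> V}"

definition perc_prob :: "'b set set \<Rightarrow> ('b set \<Rightarrow> real) \<Rightarrow> ('b set set \<Rightarrow> bool) \<Rightarrow> real" where
  "perc_prob E \<mu> A =
     (\<Sum>X\<in>{X. X \<subseteq> E \<and> A X}. (\<Prod>e\<in>X. \<mu> e) * (\<Prod>e\<in>E - X. 1 - \<mu> e))"

definition weight :: "'b set set \<Rightarrow> ('b set \<Rightarrow> real) \<Rightarrow> bool" where
  "weight E \<mu> \<longleftrightarrow> (\<forall>e\<in>E. 0 \<le> \<mu> e \<and> \<mu> e \<le> 1)"

definition symmetric_weight :: "'a set set \<Rightarrow> (('a \<times> bool) set \<Rightarrow> real) \<Rightarrow> bool" where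
  "symmetric_weight E \<mu> \<longleftrightarrow>
     (\<forall>x y. {x, y} \<in> E \<longrightarrow> \<mu> {(x, False), (y, False)} = \<mu> {(x, True), (y, True)})"

definition bunkbed :: "'a set \<Rightarrow> 'a set set \<Rightarrow> bool" where
  "bunkbed V E \<longleftrightarrow>
     (\<forall>\<mu>. weight (bb_edges V E) \<mu> \<longrightarrow> symmetric_weight E \<mu> \<longrightarrow>
       (\<forall>x\<in>V. \<forall>y\<in>V.
          perc_prob (bb_edges V E) \<mu> (\<lambda>X. joined X (x, False) (y, True))
          \<le> perc_prob (bb_edges V E) \<mu> (\<lambda>X. joined X (x, False) (y, False))))"

end

theory Submission
  imports Defs
begin

text \<open>
  Removing the rung \<open>v\<^sup>-v\<^sup>+\<close> from \<open>BB(H)\<close> splits the edges of \<open>BB(F)\<close> into those of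
  \<open>BB(G)\<close> and those of \<open>BB(H) - v\<^sup>-v\<^sup>+\<close>, two edge sets sharing only the vertices \<open>v\<^sup>-, v\<^sup>+\<close>.
  Condition on the open edges of \<open>BB(G)\<close>: a path from \<open>x\<^sup>-\<close> to \<open>y\<^sup>\<plusminus>\<close> crosses into the
  second part once, at \<open>v\<^sup>-\<close> or \<open>v\<^sup>+\<close>. The second part is invariant under exchanging the two
  layers, so the conditional difference between reaching \<open>y\<^sup>+\<close> and \<open>y\<^sup>-\<close> is
  \<open>a \<cdot> ([x\<^sup>- \<sim> v\<^sup>+] - [x\<^sup>- \<sim> v\<^sup>-])\<close>, where \<open>a \<ge> 0\<close> is the bunkbed gap of \<open>H\<close> from \<open>v\<close> to \<open>y\<close>
  with the rung at \<open>v\<close> given weight \<open>0\<close>. Averaging, the bunkbed inequality for \<open>G\<close> from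
  \<open>x\<close> to \<open>v\<close> makes the total difference nonpositive.
\<close>

section \<open>Edge percolation\<close>

definition config_prob :: "'b set set \<Rightarrow> ('b set \<Rightarrow> real) \<Rightarrow> 'b set set \<Rightarrow> real" where
  "config_prob E \<mu> X = (\<Prod>e\<in>X. \<mu> e) * (\<Prod>e\<in>E - X. 1 - \<mu> e)"

lemma perc_prob_eq_sum_Pow:
  assumes "finite E"
  shows "perc_prob E \<mu> A = (\<Sum>X\<in>Pow E. of_bool (A X) * config_prob E \<mu> X)"
proof -
  have "{X. X \<subseteq> E \<and> A X} = {X \<in> Pow E. A X}" by auto
  moreover have "of_bool b * r = (if b then r else 0)" for b and r :: real by simp
  ultimately show ?thesis
    unfolding perc_prob_def config_prob_def
    using sum.inter_filter[of "Pow E" _ A] assms by simp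
qed

lemma perc_prob_cong:
  "(\<And>X. X \<subseteq> E \<Longrightarrow> A X = B X) \<Longrightarrow> perc_prob E \<mu> A = perc_prob E \<mu> B"
  unfolding perc_prob_def by (metis (mono_tags, lifting))

lemma perc_prob_weight_cong:
  "(\<And>e. e \<in> E \<Longrightarrow> \<mu> e = \<nu> e) \<Longrightarrow> perc_prob E \<mu> A = perc_prob E \<nu> A"
  unfolding perc_prob_def
  by (intro sum.cong refl arg_cong2[where f="(*)"] prod.cong) auto

lemma perc_prob_False [simp]: "perc_prob E \<mu> (\<lambda>_. False) = 0"
  unfolding perc_prob_def by simp

lemma config_prob_Un:
  assumes "X1 \<subseteq> E1" "X2 \<subseteq> E2" "E1 \<inter> E2 = {}" "finite E1" "finite E2"
  shows "config_prob (E1 \<union> E2) \<mu> (X1 \<union> X2) = config_prob E1 \<mu> X1 * config_prob E2 \<mu> X2"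
proof -
  have "finite X1" "finite X2" "X1 \<inter> X2 = {}" "(E1 - X1) \<inter> (E2 - X2) = {}"
    using assms by (auto intro: finite_subset)
  moreover have "E1 \<union> E2 - (X1 \<union> X2) = (E1 - X1) \<union> (E2 - X2)" using assms by auto
  ultimately show ?thesis
    unfolding config_prob_def using assms
    by (simp add: prod.union_disjoint algebra_simps)
qed

lemma sum_Pow_Un:
  assumes "finite E1" "finite E2" "E1 \<inter> E2 = {}"
  shows "(\<Sum>X\<in>Pow (E1 \<union> E2). f X) = (\<Sum>X1\<in>Pow E1. \<Sum>X2\<in>Pow E2. f (X1 \<union> X2))"
proof -
  have "Pow (E1 \<union> E2) = (\<lambda>(X1, X2). X1 \<union> X2) ` (Pow E1 \<times> Pow E2)"
  proof
    show "Pow (E1 \<union> E2) \<subseteq> (\<lambda>(X1, X2). X1 \<union> X2) ` (Pow E1 \<times> Pow E2)"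
    proof
      fix X assume "X \<in> Pow (E1 \<union> E2)"
      then have "X = (\<lambda>(X1, X2). X1 \<union> X2) (X \<inter> E1, X \<inter> E2)" by auto
      then show "X \<in> (\<lambda>(X1, X2). X1 \<union> X2) ` (Pow E1 \<times> Pow E2)" by blast
    qed
  qed auto
  moreover have "inj_on (\<lambda>(X1, X2). X1 \<union> X2) (Pow E1 \<times> Pow E2)"
  proof (rule inj_onI, clarsimp)
    fix X1 X2 Y1 Y2
    assume "X1 \<subseteq> E1" "X2 \<subseteq> E2" "Y1 \<subseteq> E1" "Y2 \<subseteq> E2" and eq: "X1 \<union> X2 = Y1 \<union> Y2"
    then have "X1 = (X1 \<union> X2) \<inter> E1" "Y1 = (Y1 \<union> Y2) \<inter> E1"
      "X2 = (X1 \<union> X2) \<inter> E2" "Y2 = (Y1 \<union> Y2) \<inter> E2"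
      using assms(3) by auto
    then show "X1 = Y1 \<and> X2 = Y2" using eq by metis
  qed
  ultimately show ?thesis
    by (simp add: sum.reindex sum.cartesian_product split_def)
qed

lemma perc_prob_Un:
  assumes "finite E1" "finite E2" "E1 \<inter> E2 = {}"
  shows "perc_prob (E1 \<union> E2) \<mu> A =
    (\<Sum>X1\<in>Pow E1. config_prob E1 \<mu> X1 * perc_prob E2 \<mu> (\<lambda>X2. A (X1 \<union> X2)))"
proof -
  have "perc_prob (E1 \<union> E2) \<mu> A =
      (\<Sum>X1\<in>Pow E1. \<Sum>X2\<in>Pow E2. of_bool (A (X1 \<union> X2)) * config_prob (E1 \<union> E2) \<mu> (X1 \<union> X2))"
    using assms by (simp only: perc_prob_eq_sum_Pow finite_Un sum_Pow_Un)
  also have "\<dots> = (\<Sum>X1\<in>Pow E1. \<Sum>X2\<in>Pow E2.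
      config_prob E1 \<mu> X1 * (of_bool (A (X1 \<union> X2)) * config_prob E2 \<mu> X2))"
    using assms by (intro sum.cong refl) (simp add: config_prob_Un)
  finally show ?thesis
    by (simp only: perc_prob_eq_sum_Pow[OF assms(2)] sum_distrib_left)
qed

lemma perc_prob_fun_upd_zero:
  assumes "finite E" "e \<in> E"
  shows "perc_prob E (\<mu>(e := 0)) A = perc_prob (E - {e}) \<mu> A"
proof -
  have "E = {e} \<union> (E - {e})" using assms by auto
  then have "perc_prob E (\<mu>(e := 0)) A = perc_prob (E - {e}) (\<mu>(e := 0)) A"
    using perc_prob_Un[of "{e}" "E - {e}" "\<mu>(e := 0)" A] assms
    by (simp add: Pow_insert config_prob_def)
  also have "\<dots> = perc_prob (E - {e}) \<mu> A"
    by (rule perc_prob_weight_cong) simp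
  finally show ?thesis .
qed

lemma config_prob_involution:
  assumes t_E: "\<And>e. e \<in> E \<Longrightarrow> t e \<in> E" and tt: "\<And>e. e \<in> E \<Longrightarrow> t (t e) = e"
    and \<mu>_t: "\<And>e. e \<in> E \<Longrightarrow> \<mu> (t e) = \<mu> e" and X: "X \<subseteq> E"
  shows "config_prob E \<mu> (t ` X) = config_prob E \<mu> X"
proof -
  have inj: "inj_on t E" using tt by (rule inj_on_inverseI)
  have "t ` E = E"
  proof
    show "t ` E \<subseteq> E" using t_E by blast
    show "E \<subseteq> t ` E"
    proof
      fix e assume "e \<in> E"
      then have "e = t (t e)" "t e \<in> E" using tt t_E by simp_all
      then show "e \<in> t ` E" by (rule image_eqI)
    qed
  qed
  then have Diff: "E - t ` X = t ` (E - X)"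
    using inj_on_image_set_diff[OF inj, of E X] X by simp
  have prod_t: "(\<Prod>e\<in>t ` Y. f (\<mu> e)) = (\<Prod>e\<in>Y. f (\<mu> e))"
    if "Y \<subseteq> E" for Y and f :: "real \<Rightarrow> real"
  proof -
    have "(\<Prod>e\<in>t ` Y. f (\<mu> e)) = (\<Prod>e\<in>Y. f (\<mu> (t e)))"
      by (simp add: prod.reindex[OF inj_on_subset[OF inj that]])
    also have "\<dots> = (\<Prod>e\<in>Y. f (\<mu> e))"
      using that \<mu>_t by (intro prod.cong) auto
    finally show ?thesis .
  qed
  show ?thesis
    unfolding config_prob_def Diff using prod_t[OF X, of id] prod_t[of "E - X" "\<lambda>p. 1 - p"]
    by simp
qed

lemma perc_prob_involution:
  assumes "finite E" and t_E: "\<And>e. e \<in> E \<Longrightarrow> t e \<in> E" and tt: "\<And>e. e \<in> E \<Longrightarrow> t (t e) = e"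
    and \<mu>_t: "\<And>e. e \<in> E \<Longrightarrow> \<mu> (t e) = \<mu> e"
  shows "perc_prob E \<mu> A = perc_prob E \<mu> (\<lambda>X. A (t ` X))"
proof -
  have tt_X: "t ` t ` X = X" if "X \<subseteq> E" for X
    using that tt by (force simp: image_image)
  show ?thesis unfolding perc_prob_eq_sum_Pow[OF assms(1)]
  proof (rule sum.reindex_bij_witness[where i="image t" and j="image t"])
    fix X assume "X \<in> Pow E"
    then have X: "X \<subseteq> E" by simp
    show "t ` t ` X = X" using tt_X[OF X] .
    show "t ` X \<in> Pow E" using X t_E by blast
    show "of_bool (A (t ` t ` X)) * config_prob E \<mu> (t ` X) = of_bool (A X) * config_prob E \<mu> X"
      by (simp only: tt_X[OF X] config_prob_involution[of E t \<mu> X, OF t_E tt \<mu>_t X])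
  next
    fix X assume "X \<in> Pow E"
    then have X: "X \<subseteq> E" by simp
    show "t ` t ` X = X" using tt_X[OF X] .
    show "t ` X \<in> Pow E" using X t_E by blast
  qed
qed

section \<open>Connectivity\<close>

lemma joined_refl [simp]: "joined X a a"
  unfolding joined_def by simp

lemma joined_trans: "joined X a b \<Longrightarrow> joined X b c \<Longrightarrow> joined X a c"
  unfolding joined_def by (rule rtranclp_trans)

lemma joined_edge: "{a, b} \<in> X \<Longrightarrow> joined X a b"
  unfolding joined_def by (rule r_into_rtranclp) simp

lemma joined_mono: "joined X a b \<Longrightarrow> X \<subseteq> Y \<Longrightarrow> joined Y a b"
  unfolding joined_def by (erule rtranclp_mono[THEN predicate2D, rotated]) auto

lemma joined_sym: "joined X a b \<Longrightarrow> joined X b a"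
  unfolding joined_def
proof (induction rule: rtranclp_induct)
  case (step y z)
  then have "{z, y} \<in> X" by (simp add: insert_commute)
  with step.IH show ?case by (meson converse_rtranclp_into_rtranclp)
qed simp

lemma joined_image: "joined X a b \<Longrightarrow> joined ((`) f ` X) (f a) (f b)"
  unfolding joined_def
proof (induction rule: rtranclp_induct)
  case (step y z)
  have "{f y, f z} = f ` {y, z}" by simp
  also have "\<dots> \<in> (`) f ` X" by (rule imageI) (use step.hyps(2) in simp)
  finally have "{f y, f z} \<in> (`) f ` X" .
  with step.IH show ?case by (rule rtranclp.rtrancl_into_rtrancl)
qed simp

text \<open>Among \<open>b, c, d\<close> two coincide, and every coincidence shortens the detour.\<close>
lemma joined_detour_two_points:
  fixes p :: "bool \<Rightarrow> 'b"
  assumes "joined X1 a (p b)" "joined X2 (p b) (p c)" "joined X1 (p c) (p d)"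
  shows "\<exists>b'. joined X1 a (p b') \<and> joined X2 (p b') (p d)"
proof -
  have "d = c \<or> d = b \<or> b = c" by auto
  moreover have ?thesis if "d = c" using assms that by blast
  moreover have ?thesis if "d = b" using assms(1) that by (intro exI[of _ d]) simp
  moreover have ?thesis if "b = c"
    using joined_trans[OF assms(1)] assms(3) that by (intro exI[of _ d]) simp
  ultimately show ?thesis by blast
qed

lemma joined_Un_through_cut:
  fixes p :: "bool \<Rightarrow> 'b"
  assumes X1: "\<Union>X1 \<subseteq> S1" and X2: "\<Union>X2 \<subseteq> S2" and cut: "S1 \<inter> S2 \<subseteq> range p"
    and a: "a \<in> S1" and z: "z \<in> S2" and path: "joined (X1 \<union> X2) a z"
  shows "\<exists>b. joined X1 a (p b) \<and> joined X2 (p b) z"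
proof -
  let ?via = "\<lambda>w. \<exists>b. joined X1 a (p b) \<and> joined X2 (p b) w"
  define I1 where "I1 w \<longleftrightarrow> joined X1 a w \<or> (\<exists>c. ?via (p c) \<and> joined X1 (p c) w)" for w
  have via_I1: "?via (p d)" if "I1 (p d)" for d
  proof (cases "joined X1 a (p d)")
    case False
    then show ?thesis using that joined_detour_two_points[of X1 a p _ X2 _ d] unfolding I1_def by blast
  qed (intro exI[of _ d], simp)
  define I where "I w \<longleftrightarrow> (w \<in> S1 \<and> I1 w) \<or> (w \<in> S2 \<and> ?via w)" for w
  have I1_of_I: "I1 w" if "w \<in> S1" "I w" for w
  proof (cases "w \<in> S2 \<and> ?via w")
    case True
    then obtain c where "w = p c" using cut \<open>w \<in> S1\<close> by blast
    then show ?thesis using True unfolding I1_def by auto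
  qed (use that in \<open>unfold I_def, blast\<close>)
  have via_of_I: "?via w" if "w \<in> S2" "I w" for w
  proof (cases "w \<in> S1 \<and> I1 w")
    case True
    then obtain d where "w = p d" using cut \<open>w \<in> S2\<close> by blast
    then show ?thesis using True via_I1 by blast
  qed (use that in \<open>unfold I_def, blast\<close>)
  have "I z"
    using path unfolding joined_def
  proof (induction rule: rtranclp_induct)
    case base
    then show ?case using a unfolding I_def I1_def by simp
  next
    case (step y w)
    from step.hyps(2) consider "{y, w} \<in> X1" | "{y, w} \<in> X2" by auto
    then show ?case
    proof cases
      case 1
      then have "y \<in> S1" "w \<in> S1" using X1 by auto
      then have "I1 w"
        using I1_of_I[OF _ step.IH] joined_trans[OF _ joined_edge[OF 1]] unfolding I1_def by blast
      then show ?thesis using \<open>w \<in> S1\<close> unfolding I_def by blast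
    next
      case 2
      then have "y \<in> S2" "w \<in> S2" using X2 by auto
      then have "?via w"
        using via_of_I[OF _ step.IH] joined_trans[OF _ joined_edge[OF 2]] by blast
      then show ?thesis using \<open>w \<in> S2\<close> unfolding I_def by blast
    qed
  qed
  then show ?thesis using via_of_I[OF z] by blast
qed

section \<open>Bunkbed graphs\<close>

definition flip_layer :: "'a \<times> bool \<Rightarrow> 'a \<times> bool" where
  "flip_layer q = (fst q, \<not> snd q)"

lemma flip_layer_Pair [simp]: "flip_layer (a, b) = (a, \<not> b)"
  by (simp add: flip_layer_def)

lemma flip_layer_flip_layer [simp]: "flip_layer (flip_layer q) = q"
  by (simp add: flip_layer_def)

lemma joined_flip_layer:
  "joined ((`) flip_layer ` X) a c \<longleftrightarrow> joined X (flip_layer a) (flip_layer c)"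
  using joined_image[of X "flip_layer a" "flip_layer c" flip_layer]
    joined_image[of "(`) flip_layer ` X" a c flip_layer]
  by (auto simp: image_image)

definition rung :: "'a \<Rightarrow> ('a \<times> bool) set" where
  "rung a = {(a, False), (a, True)}"

lemma flip_layer_rung [simp]: "flip_layer ` rung a = rung a"
  by (auto simp: rung_def)

lemma bb_edgesE [consumes 1]:
  assumes "e \<in> bb_edges V E"
  obtains (horizontal) a c b where "{a, c} \<in> E" "e = {(a, b), (c, b)}"
    | (rung) a where "a \<in> V" "e = rung a"
  using assms unfolding bb_edges_def rung_def by blast

lemma horizontal_in_bb_edges: "{a, c} \<in> E \<Longrightarrow> {(a, b), (c, b)} \<in> bb_edges V E"
  unfolding bb_edges_def by blast

lemma rung_in_bb_edges: "a \<in> V \<Longrightarrow> rung a \<in> bb_edges V E"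
  unfolding bb_edges_def rung_def by blast

lemma horizontal_ne_rung: "{(a, b), (c, b)} \<noteq> rung u"
  by (auto simp: rung_def doubleton_eq_iff)

lemma bb_edges_mono:
  assumes "V \<subseteq> V'" "E \<subseteq> E'"
  shows "bb_edges V E \<subseteq> bb_edges V' E'"
proof
  fix e assume "e \<in> bb_edges V E"
  then show "e \<in> bb_edges V' E'"
  proof (cases rule: bb_edgesE)
    case (horizontal a c b)
    then show ?thesis using assms(2) by (auto intro!: horizontal_in_bb_edges)
  next
    case (rung a)
    then show ?thesis using assms(1) by (auto intro!: rung_in_bb_edges)
  qed
qed

lemma bb_edges_Un: "bb_edges (V \<union> V') (E \<union> E') = bb_edges V E \<union> bb_edges V' E'"
proof
  show "bb_edges (V \<union> V') (E \<union> E') \<subseteq> bb_edges V E \<union> bb_edges V' E'"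
  proof
    fix e assume "e \<in> bb_edges (V \<union> V') (E \<union> E')"
    then show "e \<in> bb_edges V E \<union> bb_edges V' E'"
    proof (cases rule: bb_edgesE)
      case (horizontal a c b)
      then show ?thesis by (auto intro: horizontal_in_bb_edges)
    next
      case (rung a)
      then show ?thesis by (auto intro: rung_in_bb_edges)
    qed
  qed
qed (simp add: bb_edges_mono)

lemma bb_edges_subset_layers: "\<Union>E \<subseteq> V \<Longrightarrow> \<Union>(bb_edges V E) \<subseteq> V \<times> UNIV"
  unfolding bb_edges_def by auto

lemma finite_bb_edges:
  assumes "finite V" "\<Union>E \<subseteq> V"
  shows "finite (bb_edges V E)"
proof (rule finite_subset)
  show "bb_edges V E \<subseteq> Pow (V \<times> UNIV)" using bb_edges_subset_layers[OF assms(2)] by blast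
qed (use assms(1) in simp)

lemma bb_edges_Int_Diff_rung:
  assumes VV': "V \<inter> V' = {v}" and EE': "E \<inter> E' = {}"
  shows "bb_edges V E \<inter> (bb_edges V' E' - {rung v}) = {}"
proof -
  have False if e: "e \<in> bb_edges V E" "e \<in> bb_edges V' E'" "e \<noteq> rung v" for e
    using e(1)
  proof (cases rule: bb_edgesE)
    case (horizontal a c b)
    from e(2) show False
    proof (cases rule: bb_edgesE)
      case (horizontal a' c' b')
      then have "{a, c} = {a', c'}"
        using \<open>e = {(a, b), (c, b)}\<close> by (auto simp: doubleton_eq_iff)
      then show False using EE' \<open>{a, c} \<in> E\<close> \<open>{a', c'} \<in> E'\<close> by auto
    qed (use horizontal horizontal_ne_rung in metis)
  next
    case (rung a)
    from e(2) show False
    proof (cases rule: bb_edgesE)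
      case (rung a')
      then have "a = a'" using \<open>e = rung a\<close> by (auto simp: rung_def doubleton_eq_iff)
      then show False using VV' e(3) \<open>a \<in> V\<close> \<open>a' \<in> V'\<close> rung by auto
    qed (use rung horizontal_ne_rung in metis)
  qed
  then show ?thesis by blast
qed

lemma flip_layer_bb_edges:
  assumes "e \<in> bb_edges V E"
  shows "flip_layer ` e \<in> bb_edges V E"
  using assms
proof (cases rule: bb_edgesE)
  case (horizontal a c b)
  then show ?thesis by (simp add: horizontal_in_bb_edges)
qed (simp add: rung_in_bb_edges)

lemma symmetric_weight_flip_layer:
  assumes sym: "symmetric_weight E \<mu>" and e: "e \<in> bb_edges V E"
  shows "\<mu> (flip_layer ` e) = \<mu> e"
  using e
proof (cases rule: bb_edgesE)
  case (horizontal a c b)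
  then show ?thesis using sym unfolding symmetric_weight_def by (cases b) auto
qed simp

lemma weight_subset: "weight E \<mu> \<Longrightarrow> E' \<subseteq> E \<Longrightarrow> weight E' \<mu>"
  unfolding weight_def by blast

lemma symmetric_weight_Un_left: "symmetric_weight (E \<union> E') \<mu> \<Longrightarrow> symmetric_weight E \<mu>"
  unfolding symmetric_weight_def by blast

lemma symmetric_weight_Un_right: "symmetric_weight (E \<union> E') \<mu> \<Longrightarrow> symmetric_weight E' \<mu>"
  unfolding symmetric_weight_def by blast

lemma perc_prob_flip_layer:
  assumes "finite (bb_edges V E)" "symmetric_weight E \<mu>"
  shows "perc_prob (bb_edges V E - rung ` R) \<mu> A
       = perc_prob (bb_edges V E - rung ` R) \<mu> (\<lambda>X. A ((`) flip_layer ` X))"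
proof (rule perc_prob_involution)
  fix e assume e: "e \<in> bb_edges V E - rung ` R"
  show "flip_layer ` e \<in> bb_edges V E - rung ` R"
  proof
    show "flip_layer ` e \<in> bb_edges V E" using e flip_layer_bb_edges by blast
    show "flip_layer ` e \<notin> rung ` R"
    proof
      assume "flip_layer ` e \<in> rung ` R"
      then obtain a where "a \<in> R" "flip_layer ` e = rung a" by blast
      have "e = flip_layer ` flip_layer ` e" by (simp add: image_image)
      also have "\<dots> = rung a" using \<open>flip_layer ` e = rung a\<close> by simp
      finally have "e = rung a" .
      then show False using e \<open>a \<in> R\<close> by blast
    qed
  qed
  show "flip_layer ` flip_layer ` e = e" by (simp add: image_image)
  show "\<mu> (flip_layer ` e) = \<mu> e" using e assms(2) symmetric_weight_flip_layer by blast
qed (use assms(1) in simp)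

text \<open>Deleting a rung amounts to giving it weight zero, which keeps the weight symmetric.\<close>
lemma bunkbed_Diff_rung:
  assumes bb: "bunkbed V E" and fin: "finite (bb_edges V E)"
    and w: "weight (bb_edges V E) \<mu>" and sym: "symmetric_weight E \<mu>"
    and "u \<in> V" "x \<in> V" "y \<in> V"
  shows "perc_prob (bb_edges V E - {rung u}) \<mu> (\<lambda>X. joined X (x, False) (y, True))
       \<le> perc_prob (bb_edges V E - {rung u}) \<mu> (\<lambda>X. joined X (x, False) (y, False))"
proof -
  let ?\<mu>' = "\<mu>(rung u := 0)"
  have "weight (bb_edges V E) ?\<mu>'" using w unfolding weight_def by simp
  moreover have "symmetric_weight E ?\<mu>'"
    using sym unfolding symmetric_weight_def by (simp add: horizontal_ne_rung)
  ultimately have "perc_prob (bb_edges V E) ?\<mu>' (\<lambda>X. joined X (x, False) (y, True))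
      \<le> perc_prob (bb_edges V E) ?\<mu>' (\<lambda>X. joined X (x, False) (y, False))"
    using bb assms(6,7) unfolding bunkbed_def by blast
  then show ?thesis
    using perc_prob_fun_upd_zero[OF fin rung_in_bb_edges[OF \<open>u \<in> V\<close>]] by simp
qed

section \<open>Gluing two bunkbed graphs at a vertex\<close>

lemma perc_prob_flip_invariant_diff:
  assumes flip: "\<And>A. perc_prob E \<mu> A = perc_prob E \<mu> (\<lambda>X. A ((`) flip_layer ` X))"
  shows "perc_prob E \<mu> (\<lambda>X. \<exists>b. g b \<and> joined X (v, b) (y, True))
       - perc_prob E \<mu> (\<lambda>X. \<exists>b. g b \<and> joined X (v, b) (y, False))
     = (of_bool (g True) - of_bool (g False))
       * (perc_prob E \<mu> (\<lambda>X. joined X (v, False) (y, False))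
          - perc_prob E \<mu> (\<lambda>X. joined X (v, False) (y, True)))"
proof -
  have swap: "perc_prob E \<mu> (\<lambda>X. joined X (v, True) (y, s))
      = perc_prob E \<mu> (\<lambda>X. joined X (v, False) (y, \<not> s))" for s
    using flip[of "\<lambda>X. joined X (v, True) (y, s)"] by (simp add: joined_flip_layer)
  have both: "perc_prob E \<mu> (\<lambda>X. joined X (v, True) (y, True) \<or> joined X (v, False) (y, True))
      = perc_prob E \<mu> (\<lambda>X. joined X (v, True) (y, False) \<or> joined X (v, False) (y, False))"
    using flip[of "\<lambda>X. joined X (v, True) (y, True) \<or> joined X (v, False) (y, True)"]
    by (simp add: joined_flip_layer disj_commute)
  show ?thesis
    by (cases "g True"; cases "g False") (simp_all add: ex_bool_eq swap both)
qed

lemma joined_Un_through_vertex: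
  fixes r s :: bool
  assumes X1: "\<Union>X1 \<subseteq> VG \<times> UNIV" and X2: "\<Union>X2 \<subseteq> VH \<times> UNIV" and cut: "VG \<inter> VH = {v}"
    and x: "x \<in> VG" and y: "y \<in> VH"
  shows "joined (X1 \<union> X2) (x, r) (y, s) \<longleftrightarrow>
    (\<exists>b. joined X1 (x, r) (v, b) \<and> joined X2 (v, b) (y, s))"
proof
  assume path: "joined (X1 \<union> X2) (x, r) (y, s)"
  have "(VG \<times> UNIV) \<inter> (VH \<times> UNIV) \<subseteq> range (Pair v)" using cut by auto
  moreover have "(x, r) \<in> VG \<times> UNIV" "(y, s) \<in> VH \<times> UNIV" using x y by simp_all
  ultimately show "\<exists>b. joined X1 (x, r) (v, b) \<and> joined X2 (v, b) (y, s)"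
    by (rule joined_Un_through_cut[of X1 _ X2 _ "Pair v", OF X1 X2 _ _ _ path])
next
  assume "\<exists>b. joined X1 (x, r) (v, b) \<and> joined X2 (v, b) (y, s)"
  then show "joined (X1 \<union> X2) (x, r) (y, s)"
    by (meson Un_upper1 Un_upper2 joined_mono joined_trans)
qed

lemma perc_prob_glued_diff:
  assumes fin: "finite BG" "finite BH" and disj: "BG \<inter> BH = {}"
    and flip: "\<And>A. perc_prob BH \<mu> A = perc_prob BH \<mu> (\<lambda>X. A ((`) flip_layer ` X))"
    and through: "\<And>X1 X2 s. X1 \<subseteq> BG \<Longrightarrow> X2 \<subseteq> BH \<Longrightarrow>
      joined (X1 \<union> X2) x (y, s) \<longleftrightarrow> (\<exists>b. joined X1 x (v, b) \<and> joined X2 (v, b) (y, s))"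
  shows "perc_prob (BG \<union> BH) \<mu> (\<lambda>X. joined X x (y, True))
       - perc_prob (BG \<union> BH) \<mu> (\<lambda>X. joined X x (y, False))
     = (perc_prob BH \<mu> (\<lambda>X. joined X (v, False) (y, False))
        - perc_prob BH \<mu> (\<lambda>X. joined X (v, False) (y, True)))
       * (perc_prob BG \<mu> (\<lambda>X. joined X x (v, True)) - perc_prob BG \<mu> (\<lambda>X. joined X x (v, False)))"
    (is "_ = ?a * _")
proof -
  let ?g = "\<lambda>b X1. joined X1 x (v, b)"
  let ?inner = "\<lambda>s X1. perc_prob BH \<mu> (\<lambda>X2. \<exists>b. ?g b X1 \<and> joined X2 (v, b) (y, s))"
  have conditioned: "perc_prob (BG \<union> BH) \<mu> (\<lambda>X. joined X x (y, s))
      = (\<Sum>X1\<in>Pow BG. config_prob BG \<mu> X1 * ?inner s X1)" for s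
    unfolding perc_prob_Un[OF fin disj]
    by (intro sum.cong refl arg_cong2[where f="(*)"] perc_prob_cong) (simp add: through)
  have "perc_prob (BG \<union> BH) \<mu> (\<lambda>X. joined X x (y, True))
      - perc_prob (BG \<union> BH) \<mu> (\<lambda>X. joined X x (y, False))
      = (\<Sum>X1\<in>Pow BG. config_prob BG \<mu> X1 * (?inner True X1 - ?inner False X1))"
    unfolding conditioned by (simp add: sum_subtractf right_diff_distrib)
  also have "\<dots> = (\<Sum>X1\<in>Pow BG.
      ?a * (of_bool (?g True X1) * config_prob BG \<mu> X1) - ?a * (of_bool (?g False X1) * config_prob BG \<mu> X1))"
    unfolding perc_prob_flip_invariant_diff[OF flip]
    by (intro sum.cong refl) (simp only: left_diff_distrib right_diff_distrib mult_ac)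
  also have "\<dots> = ?a * (perc_prob BG \<mu> (?g True) - perc_prob BG \<mu> (?g False))"
    by (simp only: perc_prob_eq_sum_Pow[OF fin(1)] sum_subtractf sum_distrib_left right_diff_distrib)
  finally show ?thesis .
qed

lemma bunkbed_glue_at_vertex:
  fixes VG VH :: "'a set" and EG EH :: "'a set set"
  assumes fin: "finite VG" "finite VH" and cut: "VG \<inter> VH = {v}"
    and EG: "\<Union>EG \<subseteq> VG" and EH: "\<Union>EH \<subseteq> VH" and disj: "EG \<inter> EH = {}"
    and w: "weight (bb_edges (VG \<union> VH) (EG \<union> EH)) \<mu>" and sym: "symmetric_weight (EG \<union> EH) \<mu>"
    and bbG: "bunkbed VG EG" and bbH: "bunkbed VH EH"
    and x: "x \<in> VG" and y: "y \<in> VH"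
  shows "perc_prob (bb_edges (VG \<union> VH) (EG \<union> EH)) \<mu> (\<lambda>X. joined X (x, False) (y, True))
       \<le> perc_prob (bb_edges (VG \<union> VH) (EG \<union> EH)) \<mu> (\<lambda>X. joined X (x, False) (y, False))"
proof -
  define BG where "BG = bb_edges VG EG"
  define BH where "BH = bb_edges VH EH - {rung v}"
  have v: "v \<in> VG" "v \<in> VH" using cut by auto
  have BF: "bb_edges (VG \<union> VH) (EG \<union> EH) = BG \<union> BH"
    using rung_in_bb_edges[OF v(1)] unfolding BG_def BH_def bb_edges_Un by blast
  have fin_bb: "finite BG" "finite (bb_edges VH EH)"
    using finite_bb_edges fin EG EH unfolding BG_def by blast+
  have fin_BH: "finite BH" using fin_bb(2) unfolding BH_def by simp
  have BG_BH: "BG \<inter> BH = {}"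
    unfolding BG_def BH_def by (rule bb_edges_Int_Diff_rung[OF cut disj])
  have flip: "perc_prob BH \<mu> A = perc_prob BH \<mu> (\<lambda>X. A ((`) flip_layer ` X))" for A
    using perc_prob_flip_layer[OF fin_bb(2) symmetric_weight_Un_right[OF sym], of "{v}"]
    unfolding BH_def by simp
  have through: "joined (X1 \<union> X2) (x, False) (y, s) \<longleftrightarrow>
      (\<exists>b. joined X1 (x, False) (v, b) \<and> joined X2 (v, b) (y, s))"
    if "X1 \<subseteq> BG" "X2 \<subseteq> BH" for X1 X2 s
    using that bb_edges_subset_layers[OF EG] bb_edges_subset_layers[OF EH] unfolding BG_def BH_def
    by (intro joined_Un_through_vertex[OF _ _ cut x y]) blast+
  note diff = perc_prob_glued_diff[OF fin_bb(1) fin_BH BG_BH flip through]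
  have "weight (bb_edges VH EH) \<mu>" "weight BG \<mu>"
    using w unfolding BG_def bb_edges_Un by (auto elim!: weight_subset)
  then have "0 \<le> perc_prob BH \<mu> (\<lambda>X. joined X (v, False) (y, False))
      - perc_prob BH \<mu> (\<lambda>X. joined X (v, False) (y, True))" (is "0 \<le> ?a")
    using bunkbed_Diff_rung[OF bbH fin_bb(2) _ symmetric_weight_Un_right[OF sym] v(2) v(2) y]
    unfolding BH_def by simp
  moreover have "perc_prob BG \<mu> (\<lambda>X. joined X (x, False) (v, True))
      - perc_prob BG \<mu> (\<lambda>X. joined X (x, False) (v, False)) \<le> 0" (is "?d \<le> 0")
    using bbG \<open>weight BG \<mu>\<close> symmetric_weight_Un_left[OF sym] x v(1)
    unfolding bunkbed_def BG_def by simp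
  ultimately have "?a * ?d \<le> 0" by (rule mult_nonneg_nonpos)
  then show ?thesis using diff unfolding BF by linarith
qed

section \<open>Splitting a graph at a vertex\<close>

lemma components_subset: "C \<in> components V E \<Longrightarrow> C \<subseteq> V"
  unfolding components_def by blast

lemma Union_components: "\<Union>(components V E) = V"
proof
  show "V \<subseteq> \<Union>(components V E)"
  proof
    fix w assume "w \<in> V"
    then have "w \<in> {y \<in> V. joined E w y}" "{y \<in> V. joined E w y} \<in> components V E"
      unfolding components_def by auto
    then show "w \<in> \<Union>(components V E)" by blast
  qed
qed (use components_subset in blast)

lemma components_disjoint:
  assumes "C1 \<in> components V E" "C2 \<in> components V E" "z \<in> C1" "z \<in> C2"
  shows "C1 = C2"
proof -
  obtain w1 w2 where C: "C1 = {y \<in> V. joined E w1 y}" "C2 = {y \<in> V. joined E w2 y}"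
    using assms(1,2) unfolding components_def by blast
  then have "joined E w1 z" "joined E w2 z" using assms(3,4) by auto
  then have "joined E w1 w2" "joined E w2 w1" by (metis joined_sym joined_trans)+
  then have "joined E w1 y \<longleftrightarrow> joined E w2 y" for y by (metis joined_trans)
  then show ?thesis unfolding C by simp
qed

lemma components_edge_closed:
  assumes "C \<in> components V E" "a \<in> C" "{a, c} \<in> E" "c \<in> V"
  shows "c \<in> C"
proof -
  obtain w where C: "C = {y \<in> V. joined E w y}"
    using assms(1) unfolding components_def by blast
  then have "joined E w a" using assms(2) by simp
  then have "joined E w c" using joined_edge[OF assms(3)] by (rule joined_trans)
  then show ?thesis unfolding C using assms(4) by simp
qed

lemma split_at_vertex_vertices:
  assumes v: "v \<in> V"
    and CS: "CS = components (V - {v}) (induced_edges E (V - {v}))" and J: "J \<subseteq> CS"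
    and VG: "VG = \<Union>J \<union> {v}" and VH: "VH = \<Union>(CS - J) \<union> {v}"
  shows "VG \<inter> VH = {v}" and "VG \<union> VH = V"
proof -
  have "\<Union>CS = V - {v}" unfolding CS by (rule Union_components)
  then have W: "\<Union>J \<union> \<Union>(CS - J) = V - {v}"
    using J by (simp add: Union_Un_distrib[symmetric] Un_absorb1)
  have side: "C \<in> J \<longleftrightarrow> C' \<in> J" if "C \<in> CS" "C' \<in> CS" "z \<in> C" "z \<in> C'" for C C' z
  proof -
    have "C = C'" using components_disjoint[OF that[unfolded CS]] .
    then show ?thesis by simp
  qed
  show "VG \<inter> VH = {v}" using W side J unfolding VG VH by blast
  show "VG \<union> VH = V" using W v unfolding VG VH by blast
qed

lemma split_at_vertex_edges:
  assumes G: "simple_graph V E" and v: "v \<in> V"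
    and CS: "CS = components (V - {v}) (induced_edges E (V - {v}))" and J: "J \<subseteq> CS"
    and VG: "VG = \<Union>J \<union> {v}" and VH: "VH = \<Union>(CS - J) \<union> {v}"
  shows "E = induced_edges E VG \<union> induced_edges E VH"
    and "induced_edges E VG \<inter> induced_edges E VH = {}"
proof -
  note cap = split_at_vertex_vertices(1)[OF v CS J VG VH]
  note cup = split_at_vertex_vertices(2)[OF v CS J VG VH]
  have edge_side: "e \<subseteq> VG \<or> e \<subseteq> VH" if e: "e \<in> E" for e
  proof -
    obtain a c where ac: "e = {a, c}" "a \<in> V" "c \<in> V"
      using G e unfolding simple_graph_def by blast
    show ?thesis
    proof (cases "a = v \<or> c = v")
      case True
      then show ?thesis using ac cup cap by blast
    next
      case False
      then have a: "a \<in> V - {v}" and c: "c \<in> V - {v}" and e_W: "e \<in> induced_edges E (V - {v})"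
        using ac e unfolding induced_edges_def by auto
      have "a \<in> \<Union>CS" using a unfolding CS Union_components .
      then obtain C where C: "C \<in> CS" "a \<in> C" by blast
      then have "c \<in> C"
        using components_edge_closed[of C _ _ a c] c e_W ac(1) unfolding CS by simp
      then show ?thesis using C ac(1) unfolding VG VH by blast
    qed
  qed
  show "E = induced_edges E VG \<union> induced_edges E VH"
    using edge_side unfolding induced_edges_def by blast
  have False if "e \<in> E" "e \<subseteq> VG" "e \<subseteq> VH" for e
  proof -
    obtain a c where "e = {a, c}" "a \<noteq> c"
      using G \<open>e \<in> E\<close> unfolding simple_graph_def by blast
    moreover from this have "a \<in> VG \<inter> VH" "c \<in> VG \<inter> VH" using that by auto
    ultimately show False using cap by simp
  qed
  then show "induced_edges E VG \<inter> induced_edges E VH = {}"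
    unfolding induced_edges_def by blast
qed

lemma Union_induced_edges: "\<Union>(induced_edges E S) \<subseteq> S"
  unfolding induced_edges_def by blast

theorem lemma3p4:
  fixes VF :: "'a set" and EF :: "'a set set" and v :: 'a
    and J :: "'a set set" and \<mu> :: "('a \<times> bool) set \<Rightarrow> real" and x y :: 'a
  defines "CS \<equiv> components (VF - {v}) (induced_edges EF (VF - {v}))"
  defines "VG \<equiv> \<Union>J \<union> {v}"
  defines "VH \<equiv> \<Union>(CS - J) \<union> {v}"
  assumes F: "simple_graph VF EF"
    and cut: "cut_vertex VF EF v"
    and k2: "card CS \<ge> 2"
    and J: "J \<subseteq> CS"
    and w: "weight (bb_edges VF EF) \<mu>"
    and sym: "symmetric_weight EF \<mu>"
    and bbG: "bunkbed VG (induced_edges EF VG)"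
    and bbH: "bunkbed VH (induced_edges EF VH)"
    and x: "x \<in> VG" and y: "y \<in> VH"
  shows "perc_prob (bb_edges VF EF) \<mu> (\<lambda>X. joined X (x, False) (y, True))
         \<le> perc_prob (bb_edges VF EF) \<mu> (\<lambda>X. joined X (x, False) (y, False))"
proof -
  have "v \<in> VF" using cut unfolding cut_vertex_def by blast
  note split = this CS_def[THEN meta_eq_to_obj_eq] J
    VG_def[THEN meta_eq_to_obj_eq] VH_def[THEN meta_eq_to_obj_eq]
  note dec = split_at_vertex_vertices[OF split] split_at_vertex_edges[OF F split]
  have fin: "finite VG" "finite VH"
    using F dec(2) unfolding simple_graph_def by (auto intro: finite_subset)
  have F_eq: "bb_edges VF EF = bb_edges (VG \<union> VH) (induced_edges EF VG \<union> induced_edges EF VH)"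
    by (simp only: dec(2) dec(3)[symmetric])
  have "symmetric_weight (induced_edges EF VG \<union> induced_edges EF VH) \<mu>"
    using sym by (simp only: dec(3)[symmetric])
  from bunkbed_glue_at_vertex[OF fin dec(1) Union_induced_edges Union_induced_edges dec(4)
      w[unfolded F_eq] this bbG bbH x y]
  show ?thesis unfolding F_eq .
qed

end
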